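(* Let $p\ge0$ be an integer and $0<x<2\pi$. Then $$\sum_{k=1}^\infty\frac{\cos(kx)}{(2k-1)(2k)^{2p}(2k+1)}=\frac12-\frac{\pi}{4}\sin\frac x2-\frac12\sum_{j=1}^p\frac{(-1)^{j+1}\pi^{2j}}{(2j)!}B_{2j}\Big(\frac{x}{2\pi}\Big),$$ $$\sum_{k=1}^\infty\frac{\sin(kx)}{(2k-1)(2k)^{2p+1}(2k+1)}=\frac{\pi}{4}\cos\frac x2-\frac14(\pi-x)-\frac12\sum_{j=1}^p\frac{(-1)^{j+1}\pi^{2j+1}}{(2j+1)!}B_{2j+1}\Big(\frac{x}{2\pi}\Big).$$
   Context: $B_n(y)$ are the Bernoulli polynomials, defined by $\frac{te^{yt}}{e^t-1}=\sum_{k\ge0}B_k(y)\frac{t^k}{k!}$. *)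

theory Defs
  imports "HOL-Analysis.Analysis" "HOL-Computational_Algebra.Formal_Power_Series"
begin

definition bernoulli_poly :: "nat \<Rightarrow> real \<Rightarrow> real" where
  "bernoulli_poly n y = fact n * fps_nth (fps_X * fps_exp y / (fps_exp 1 - 1)) n"

end

(*
  Write C_m(x) and S_m(x) for the series with (2k)^m in the denominator and RC_p(x), RS_p(x)
  for the right-hand sides.  Termwise differentiation gives S_(m+1)' = C_m / 2 and
  C_(m+1)' = - S_m / 2, and since B_(n+1)' = (n + 1) B_n the right-hand sides obey the same
  rules: RS_p' = RC_p / 2 and RC_(p+1)' = - RS_p / 2.  So if C_(2p) = RC_p on (0, 2 pi), then
  C_(2p+2) - RC_(p+1) has derivative - (S_(2p+1) - RS_p) / 2, which is constant on (0, 2 pi);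
  as C_(2p+2) - RC_(p+1) takes the same value at 0 and 2 pi (B_n(0) = B_n(1) for n >= 2),
  Rolle's theorem makes this constant zero.  The same argument leads from the sine identity
  for p to the cosine identity for p + 1.

  For p = 0, the partial fractions 1/((2k-1)(2k+1)) = (1/(2k-1) - 1/(2k+1))/2 express
  sum_k w^(2k) / ((2k-1)(2k+1)) through artanh w = (Ln (1 + w) - Ln (1 - w)) / 2 for |w| < 1.
  The series converges absolutely on the closed unit disc, so the identity persists at
  w = e^(ix/2), where its real part is C_0(x) and Im artanh w = pi/4.
*)
theory Submission
  imports Defs
begin

lemma DERIV_suminf_dominated:
  fixes f f' :: "nat \<Rightarrow> real \<Rightarrow> real" and M :: "nat \<Rightarrow> real"
  assumes f': "\<And>n x. (f n has_real_derivative f' n x) (at x)"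
    and bound: "\<And>n x. \<bar>f' n x\<bar> \<le> M n" and "summable M"
    and "summable (\<lambda>n. f n x0)"
  shows "((\<lambda>x. \<Sum>n. f n x) has_real_derivative (\<Sum>n. f' n x)) (at x)"
proof -
  have uniform: "uniformly_convergent_on UNIV (\<lambda>n x. \<Sum>i<n. f' i x)"
    unfolding uniformly_convergent_on_def
    by (rule exI, rule Weierstrass_m_test[OF _ \<open>summable M\<close>]) (simp add: bound)
  show ?thesis
    by (rule has_field_derivative_series'(2)[of UNIV f f' x0, OF convex_UNIV _ uniform])
      (simp_all add: f' \<open>summable (\<lambda>n. f n x0)\<close>)
qed

lemma derivative_eq_0_if_endpoints_eq:
  fixes f g :: "real \<Rightarrow> real"
  assumes "a < b" "f a = f b" "continuous_on {a..b} f"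
    and f': "\<And>x. x \<in> {a<..<b} \<Longrightarrow> (f has_real_derivative g x) (at x)"
    and g': "\<And>x. x \<in> {a<..<b} \<Longrightarrow> (g has_real_derivative 0) (at x)"
    and x: "x \<in> {a<..<b}"
  shows "g x = 0"
proof -
  obtain c where c: "\<forall>y\<in>{a<..<b}. g y = c"
    using has_field_derivative_zero_constant[of "{a<..<b}" g] g'
    by (auto intro: has_field_derivative_at_within)
  obtain z where "z \<in> {a<..<b}" "(f has_real_derivative 0) (at z)"
    using Rolle[OF assms(1-3)] f' by (auto simp: real_differentiable_def)
  then have "g z = 0"
    using DERIV_unique f' by blast
  then show ?thesis
    using c x \<open>z \<in> {a<..<b}\<close> by simp
qed

section \<open>Bernoulli polynomials\<close>

definition bernoulli_fps :: "real fps" where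
  "bernoulli_fps = inverse (fps_shift 1 (fps_exp 1 - 1))"

lemma fps_exp_1_minus_1_eq: "fps_exp (1::real) - 1 = fps_X * fps_shift 1 (fps_exp 1 - 1)"
  by (rule fps_ext) simp

lemma fps_exp_1_minus_1_times_bernoulli_fps: "(fps_exp 1 - 1) * bernoulli_fps = fps_X"
proof -
  have "fps_shift 1 (fps_exp (1::real) - 1) * bernoulli_fps = 1"
    unfolding bernoulli_fps_def by (rule inverse_mult_eq_1') simp
  then show ?thesis
    by (subst fps_exp_1_minus_1_eq) (simp add: mult.assoc)
qed

lemma bernoulli_poly_conv_fps: "bernoulli_poly n y = fact n * fps_nth (fps_exp y * bernoulli_fps) n"
proof -
  have "fps_exp (1::real) - 1 \<noteq> 0"
    using fps_exp_1_minus_1_times_bernoulli_fps by auto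
  moreover have "fps_X * fps_exp y = (fps_exp y * bernoulli_fps) * (fps_exp 1 - 1)"
    using fps_exp_1_minus_1_times_bernoulli_fps by (simp add: ac_simps)
  ultimately have "fps_X * fps_exp y / (fps_exp 1 - 1) = fps_exp y * bernoulli_fps"
    by (metis fps_divide_times_eq)
  then show ?thesis
    unfolding bernoulli_poly_def by simp
qed

lemma bernoulli_poly_eq_sum:
  "bernoulli_poly n y = fact n * (\<Sum>i\<le>n. y ^ i / fact i * fps_nth bernoulli_fps (n - i))"
  unfolding bernoulli_poly_conv_fps fps_mult_nth by (simp add: atLeast0AtMost)

lemma bernoulli_fps_0: "fps_nth bernoulli_fps 0 = 1"
  unfolding bernoulli_fps_def by simp

lemma bernoulli_fps_1: "fps_nth bernoulli_fps 1 = - 1 / 2"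
proof -
  have "fps_nth ((fps_exp 1 - 1) * bernoulli_fps) 2 = 0"
    by (simp add: fps_exp_1_minus_1_times_bernoulli_fps)
  moreover have "fps_nth ((fps_exp 1 - 1) * bernoulli_fps) 2
      = fps_nth bernoulli_fps 1 + fps_nth bernoulli_fps 0 / 2"
    by (simp add: fps_mult_nth numeral_2_eq_2)
  ultimately show ?thesis
    by (simp add: bernoulli_fps_0)
qed

lemma bernoulli_poly_1: "bernoulli_poly 1 y = y - 1 / 2"
  using bernoulli_fps_1 by (simp add: bernoulli_poly_eq_sum bernoulli_fps_0)

lemma bernoulli_poly_one_eq_zero:
  assumes "n \<noteq> 1"
  shows "bernoulli_poly n 1 = bernoulli_poly n 0"
proof -
  have "fps_exp 1 * bernoulli_fps = bernoulli_fps + fps_X"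
    using fps_exp_1_minus_1_times_bernoulli_fps by (simp add: algebra_simps)
  then show ?thesis
    using assms by (simp add: bernoulli_poly_conv_fps)
qed

lemma has_real_derivative_bernoulli_poly:
  "(bernoulli_poly (Suc n) has_real_derivative real (Suc n) * bernoulli_poly n y) (at y)"
proof -
  let ?b = "\<lambda>i. fps_nth bernoulli_fps (n - i)"
  have "bernoulli_poly (Suc n) =
      (\<lambda>y. fact (Suc n) * (fps_nth bernoulli_fps (Suc n) + (\<Sum>i\<le>n. y ^ Suc i / fact (Suc i) * ?b i)))"
    (is "_ = ?B")
    by (rule ext) (simp only: bernoulli_poly_eq_sum sum.atMost_Suc_shift, simp)
  moreover have "(?B has_real_derivative
      fact (Suc n) * (0 + (\<Sum>i\<le>n. real (Suc i) * y ^ i / fact (Suc i) * ?b i))) (at y)"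
    by (intro derivative_eq_intros DERIV_sum) auto
  moreover have "fact (Suc n) * (0 + (\<Sum>i\<le>n. real (Suc i) * y ^ i / fact (Suc i) * ?b i))
      = real (Suc n) * bernoulli_poly n y"
  proof -
    have "real (Suc i) * y ^ i / fact (Suc i) = y ^ i / fact i" for i
      by (simp del: of_nat_Suc)
    then show ?thesis
      by (simp add: bernoulli_poly_eq_sum del: of_nat_Suc)
  qed
  ultimately show ?thesis
    by (simp only:)
qed

section \<open>The trigonometric series\<close>

definition denom :: "nat \<Rightarrow> nat \<Rightarrow> real" where
  "denom m n = (2 * real (Suc n) - 1) * (2 * real (Suc n)) ^ m * (2 * real (Suc n) + 1)"

definition cos_series :: "nat \<Rightarrow> real \<Rightarrow> real" where
  "cos_series m x = (\<Sum>n. cos (real (Suc n) * x) / denom m n)"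

definition sin_series :: "nat \<Rightarrow> real \<Rightarrow> real" where
  "sin_series m x = (\<Sum>n. sin (real (Suc n) * x) / denom m n)"

lemma denom_ge_square: "real (Suc n) ^ 2 \<le> denom m n"
proof -
  let ?k = "real (Suc n)"
  have "?k ^ 2 * 1 \<le> ((2 * ?k - 1) * (2 * ?k + 1)) * (2 * ?k) ^ m"
    by (intro mult_mono one_le_power) (auto simp: power2_eq_square algebra_simps)
  then show ?thesis
    unfolding denom_def by (simp add: ac_simps)
qed

lemma denom_pos: "0 < denom m n"
  using denom_ge_square[of n m] by (smt (verit) zero_less_power of_nat_0_less_iff zero_less_Suc)

lemma denom_Suc: "denom (Suc m) n = 2 * real (Suc n) * denom m n"
  unfolding denom_def by (simp add: algebra_simps)

lemma summable_inverse_denom: "summable (\<lambda>n. 1 / denom m n)"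
proof (rule summable_comparison_test)
  show "summable (\<lambda>n. 1 / real (Suc n) ^ 2)"
    using sums_summable[OF inverse_squares_sums] by simp
  have "1 / denom m n \<le> 1 / real (Suc n) ^ 2" for n
    by (rule divide_left_mono[OF denom_ge_square]) (simp_all add: denom_pos)
  then show "\<exists>N. \<forall>n\<ge>N. norm (1 / denom m n) \<le> 1 / real (Suc n) ^ 2"
    using denom_pos by (simp add: less_imp_le)
qed

lemma abs_divide_denom_le: "\<bar>a\<bar> \<le> 1 \<Longrightarrow> \<bar>a / denom m n\<bar> \<le> 1 / denom m n"
  using denom_pos[of m n] by (simp add: abs_divide divide_right_mono)

lemma summable_divide_denom:
  assumes "\<And>n. \<bar>a n\<bar> \<le> 1"
  shows "summable (\<lambda>n. a n / denom m n)"
  by (rule summable_comparison_test[OF _ summable_inverse_denom[of m]])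
    (metis assms abs_divide_denom_le real_norm_def)

lemma sums_cos_series: "(\<lambda>n. cos (real (Suc n) * x) / denom m n) sums cos_series m x"
  unfolding cos_series_def by (rule summable_sums, rule summable_divide_denom) simp

lemma sums_sin_series: "(\<lambda>n. sin (real (Suc n) * x) / denom m n) sums sin_series m x"
  unfolding sin_series_def by (rule summable_sums, rule summable_divide_denom) simp

lemma has_real_derivative_series_over_denom:
  fixes u v :: "real \<Rightarrow> real"
  assumes u: "\<And>t. (u has_real_derivative v t) (at t)"
    and bounded: "\<And>t. \<bar>u t\<bar> \<le> 1" "\<And>t. \<bar>v t\<bar> \<le> 1"
  shows "((\<lambda>x. \<Sum>n. u (real (Suc n) * x) / denom (Suc m) n) has_real_derivative
           (\<Sum>n. v (real (Suc n) * x) / denom m n) / 2) (at x)"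
proof -
  have termwise: "((\<lambda>x. u (real (Suc n) * x) / denom (Suc m) n) has_real_derivative
      v (real (Suc n) * x) / denom m n / 2) (at x)" for n x
  proof -
    have "v (real (Suc n) * x) * real (Suc n) / denom (Suc m) n = v (real (Suc n) * x) / denom m n / 2"
      using denom_pos[of m n] by (simp add: denom_Suc del: of_nat_Suc)
    then show ?thesis
      using denom_pos[of "Suc m" n]
      by (auto intro!: derivative_eq_intros DERIV_chain2[OF u])
  qed
  have dominated: "\<bar>v (real (Suc n) * x) / denom m n / 2\<bar> \<le> 1 / denom m n / 2" for n x
  proof -
    have "\<bar>v (real (Suc n) * x) / denom m n / 2\<bar> = \<bar>v (real (Suc n) * x) / denom m n\<bar> / 2"
      by (simp add: abs_mult)
    also have "\<dots> \<le> 1 / denom m n / 2"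
      by (rule divide_right_mono[OF abs_divide_denom_le[OF bounded(2)]]) simp
    finally show ?thesis .
  qed
  have "((\<lambda>x. \<Sum>n. u (real (Suc n) * x) / denom (Suc m) n) has_real_derivative
      (\<Sum>n. v (real (Suc n) * x) / denom m n / 2)) (at x)"
    by (rule DERIV_suminf_dominated[OF termwise dominated summable_divide[OF summable_inverse_denom]])
      (rule summable_divide_denom, rule bounded)
  moreover have "(\<Sum>n. v (real (Suc n) * x) / denom m n / 2) = (\<Sum>n. v (real (Suc n) * x) / denom m n) / 2"
    by (rule suminf_divide[OF summable_divide_denom]) (rule bounded)
  ultimately show ?thesis
    by (simp only:)
qed

lemma has_real_derivative_sin_series:
  "(sin_series (Suc m) has_real_derivative cos_series m x / 2) (at x)"
  unfolding sin_series_def[abs_def] cos_series_def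
  by (rule has_real_derivative_series_over_denom) (auto intro!: derivative_eq_intros)

lemma has_real_derivative_cos_series:
  "(cos_series (Suc m) has_real_derivative - sin_series m x / 2) (at x)"
proof -
  have "(\<Sum>n. - sin (real (Suc n) * x) / denom m n) = - sin_series m x"
    unfolding sin_series_def
    using suminf_minus[OF summable_divide_denom, of "\<lambda>n. sin (real (Suc n) * x)" m] by simp
  moreover have "((\<lambda>x. \<Sum>n. cos (real (Suc n) * x) / denom (Suc m) n) has_real_derivative
      (\<Sum>n. - sin (real (Suc n) * x) / denom m n) / 2) (at x)"
    by (rule has_real_derivative_series_over_denom) (auto intro!: derivative_eq_intros)
  ultimately show ?thesis
    unfolding cos_series_def[abs_def] by simp
qed

lemma cos_series_2pi: "cos_series m (2 * pi) = cos_series m 0"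
proof -
  have "cos (real (Suc n) * (2 * pi)) = 1" for n
    using cos_2npi[of "Suc n"] by (simp add: algebra_simps)
  then show ?thesis
    unfolding cos_series_def by simp
qed

lemma sin_series_2pi: "sin_series m (2 * pi) = sin_series m 0"
proof -
  have "sin (real (Suc n) * (2 * pi)) = 0" for n
    using sin_2npi[of "Suc n"] by (simp add: algebra_simps)
  then show ?thesis
    unfolding sin_series_def by simp
qed

section \<open>The closed forms and the induction step\<close>

definition scaled_bernoulli :: "nat \<Rightarrow> real \<Rightarrow> real" where
  "scaled_bernoulli n x = pi ^ n / fact n * bernoulli_poly n (x / (2 * pi))"

lemma has_real_derivative_scaled_bernoulli:
  "(scaled_bernoulli (Suc n) has_real_derivative scaled_bernoulli n x / 2) (at x)"
proof -
  have "((\<lambda>x. bernoulli_poly (Suc n) (x / (2 * pi))) has_real_derivative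
      real (Suc n) * bernoulli_poly n (x / (2 * pi)) * (1 / (2 * pi))) (at x)"
    by (rule DERIV_chain2[OF has_real_derivative_bernoulli_poly]) (auto intro!: derivative_eq_intros)
  then have "(scaled_bernoulli (Suc n) has_real_derivative
      pi ^ Suc n / fact (Suc n) * (real (Suc n) * bernoulli_poly n (x / (2 * pi)) * (1 / (2 * pi)))) (at x)"
    unfolding scaled_bernoulli_def[abs_def] by (rule DERIV_cmult)
  moreover have "pi ^ Suc n / fact (Suc n) * (real (Suc n) * bernoulli_poly n (x / (2 * pi)) * (1 / (2 * pi)))
      = scaled_bernoulli n x / 2"
    unfolding scaled_bernoulli_def by (simp add: field_simps del: of_nat_Suc)
  ultimately show ?thesis
    by (simp only:)
qed

lemma scaled_bernoulli_2pi: "n \<noteq> 1 \<Longrightarrow> scaled_bernoulli n (2 * pi) = scaled_bernoulli n 0"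
  by (simp add: scaled_bernoulli_def bernoulli_poly_one_eq_zero)

lemma scaled_bernoulli_1: "scaled_bernoulli 1 x = (x - pi) / 2"
  unfolding scaled_bernoulli_def bernoulli_poly_1 by (simp add: field_simps)

definition cos_closed_form :: "nat \<Rightarrow> real \<Rightarrow> real" where
  "cos_closed_form p x = 1 / 2 - pi / 4 * sin (x / 2)
     - 1 / 2 * (\<Sum>j = 1..p. (-1) ^ (j + 1) * scaled_bernoulli (2 * j) x)"

definition sin_closed_form :: "nat \<Rightarrow> real \<Rightarrow> real" where
  "sin_closed_form p x = pi / 4 * cos (x / 2) - 1 / 4 * (pi - x)
     - 1 / 2 * (\<Sum>j = 1..p. (-1) ^ (j + 1) * scaled_bernoulli (2 * j + 1) x)"

lemma has_real_derivative_sin_closed_form: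
  "(sin_closed_form p has_real_derivative cos_closed_form p x / 2) (at x)"
  unfolding sin_closed_form_def[abs_def] cos_closed_form_def
  by (auto intro!: derivative_eq_intros has_real_derivative_scaled_bernoulli
      simp: sum_distrib_left algebra_simps)

lemma has_real_derivative_cos_closed_form:
  "(cos_closed_form (Suc p) has_real_derivative - sin_closed_form p x / 2) (at x)"
proof -
  have "(\<Sum>j = 1..Suc p. (-1) ^ (j + 1) * scaled_bernoulli (2 * j) y)
      = (\<Sum>j = 0..p. (-1) ^ (j + 2) * scaled_bernoulli (2 * j + 2) y)" for y
    unfolding One_nat_def sum.shift_bounds_cl_Suc_ivl by (simp add: algebra_simps)
  also have "\<dots> y = scaled_bernoulli 2 y - (\<Sum>j = 1..p. (-1) ^ (j + 1) * scaled_bernoulli (2 * j + 2) y)" for y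
    by (simp add: sum.atLeast_Suc_atMost sum_negf numeral_2_eq_2)
  finally have shifted: "cos_closed_form (Suc p) = (\<lambda>y. 1 / 2 - pi / 4 * sin (y / 2)
      - 1 / 2 * (scaled_bernoulli 2 y - (\<Sum>j = 1..p. (-1) ^ (j + 1) * scaled_bernoulli (2 * j + 2) y)))"
    unfolding cos_closed_form_def by (intro ext) (simp only:)
  \<comment> \<open>the split-off term \<open>j = 1\<close> yields the linear part \<open>(x - pi) / 4\<close> of \<open>sin_closed_form\<close>\<close>
  have "(scaled_bernoulli 2 has_real_derivative (x - pi) / 4) (at x)"
    using has_real_derivative_scaled_bernoulli[of 1 x] unfolding Suc_1 scaled_bernoulli_1 by simp
  then show ?thesis
    unfolding shifted sin_closed_form_def
    by (auto intro!: derivative_eq_intros has_real_derivative_scaled_bernoulli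
        simp: sum_distrib_left algebra_simps) (simp add: field_simps)
qed

lemma cos_closed_form_2pi: "cos_closed_form p (2 * pi) = cos_closed_form p 0"
  unfolding cos_closed_form_def by (simp add: scaled_bernoulli_2pi)

lemma sin_closed_form_2pi: "sin_closed_form p (2 * pi) = sin_closed_form p 0"
  unfolding sin_closed_form_def by (simp add: scaled_bernoulli_2pi)

lemma sin_series_eq_closed_form_from_cos:
  assumes cos_eq: "\<And>y. y \<in> {0<..<2 * pi} \<Longrightarrow> cos_series (2 * p) y = cos_closed_form p y"
    and x: "x \<in> {0<..<2 * pi}"
  shows "sin_series (Suc (2 * p)) x = sin_closed_form p x"
proof -
  let ?f = "\<lambda>y. cos_series (Suc (Suc (2 * p))) y - cos_closed_form (Suc p) y"
  let ?g = "\<lambda>y. - sin_series (Suc (2 * p)) y / 2 - - sin_closed_form p y / 2"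
  have f': "(?f has_real_derivative ?g y) (at y)" for y
    by (rule DERIV_diff[OF has_real_derivative_cos_series has_real_derivative_cos_closed_form])
  have "(?g has_real_derivative 0) (at y)" if "y \<in> {0<..<2 * pi}" for y
    by (auto intro!: derivative_eq_intros has_real_derivative_sin_series has_real_derivative_sin_closed_form
        simp: cos_eq[OF that])
  moreover have "continuous_on {0..2 * pi} ?f"
    using f' by (intro continuous_at_imp_continuous_on) (blast intro: DERIV_isCont)
  ultimately have "?g x = 0"
    using f' x by (intro derivative_eq_0_if_endpoints_eq[of 0 "2 * pi" ?f])
      (auto simp: cos_series_2pi cos_closed_form_2pi)
  then show ?thesis
    by simp
qed

lemma cos_series_eq_closed_form_from_sin:
  assumes sin_eq: "\<And>y. y \<in> {0<..<2 * pi} \<Longrightarrow> sin_series (Suc (2 * p)) y = sin_closed_form p y"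
    and x: "x \<in> {0<..<2 * pi}"
  shows "cos_series (2 * Suc p) x = cos_closed_form (Suc p) x"
proof -
  let ?f = "\<lambda>y. sin_series (Suc (2 * Suc p)) y - sin_closed_form (Suc p) y"
  let ?g = "\<lambda>y. cos_series (2 * Suc p) y / 2 - cos_closed_form (Suc p) y / 2"
  have f': "(?f has_real_derivative ?g y) (at y)" for y
    by (rule DERIV_diff[OF has_real_derivative_sin_series has_real_derivative_sin_closed_form])
  have "(?g has_real_derivative 0) (at y)" if "y \<in> {0<..<2 * pi}" for y
    by (auto intro!: derivative_eq_intros has_real_derivative_cos_series has_real_derivative_cos_closed_form
        simp: sin_eq[OF that])
  moreover have "continuous_on {0..2 * pi} ?f"
    using f' by (intro continuous_at_imp_continuous_on) (blast intro: DERIV_isCont)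
  ultimately have "?g x = 0"
    using f' x by (intro derivative_eq_0_if_endpoints_eq[of 0 "2 * pi" ?f])
      (auto simp: sin_series_2pi sin_closed_form_2pi)
  then show ?thesis
    by simp
qed

section \<open>The case \<open>p = 0\<close>\<close>

lemma sums_odd_powers_Ln:
  fixes w :: complex
  assumes "norm w < 1"
  shows "(\<lambda>k. w ^ (2 * k + 1) / of_nat (2 * k + 1)) sums ((Ln (1 + w) - Ln (1 - w)) / 2)"
proof -
  let ?c = "\<lambda>n. (-1) ^ Suc n / of_nat n :: complex"
  have "(\<lambda>n. ?c n * w ^ n) sums Ln (1 + w)"
    using Ln_series[OF assms] .
  moreover have "(\<lambda>n. ?c n * (- w) ^ n) sums Ln (1 - w)"
    using Ln_series[of "- w"] assms by simp
  ultimately have "(\<lambda>n. (?c n * w ^ n - ?c n * (- w) ^ n) / 2) sums ((Ln (1 + w) - Ln (1 - w)) / 2)"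
    by (intro sums_divide sums_diff)
  also have "(\<lambda>n. (?c n * w ^ n - ?c n * (- w) ^ n) / 2) = (\<lambda>n. if odd n then w ^ n / of_nat n else 0)"
    by (auto simp: fun_eq_iff power_minus' elim: oddE)
  finally have "(\<lambda>n. if odd n then w ^ n / of_nat n else 0) sums ((Ln (1 + w) - Ln (1 - w)) / 2)" .
  then have "(\<lambda>k. (\<lambda>n. if odd n then w ^ n / of_nat n else 0) (2 * k + 1)) sums ((Ln (1 + w) - Ln (1 - w)) / 2)"
    by (subst sums_mono_reindex) (auto simp: strict_mono_def elim!: oddE)
  then show ?thesis
    by simp
qed

lemma sums_even_powers_over_odd_products:
  fixes w :: complex
  assumes "norm w < 1" "w \<noteq> 0"
  shows "(\<lambda>k. w ^ (2 * k + 2) / (of_nat (2 * k + 1) * of_nat (2 * k + 3)))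
           sums ((1 + (w - 1 / w) * ((Ln (1 + w) - Ln (1 - w)) / 2)) / 2)"
proof -
  define A where "A = (Ln (1 + w) - Ln (1 - w)) / 2"
  define b where "b k = w ^ (2 * k + 1) / of_nat (2 * k + 1)" for k
  have "b sums A"
    unfolding b_def A_def by (rule sums_odd_powers_Ln[OF assms(1)])
  moreover from this have "(\<lambda>k. b (Suc k)) sums (A - w)"
    by (subst sums_Suc_iff) (simp add: b_def)
  ultimately have sums: "(\<lambda>k. (w * b k - b (Suc k) / w) / 2) sums ((w * A - (A - w) / w) / 2)"
    by (intro sums_divide sums_diff sums_mult)
  have partial_fractions: "(w * b k - b (Suc k) / w) / 2 = w ^ (2 * k + 2) / (of_nat (2 * k + 1) * of_nat (2 * k + 3))" for k
  proof -
    define c :: complex where "c = of_nat (2 * k + 1)"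
    have c2: "of_nat (2 * k + 3) = c + 2"
      by (simp add: c_def)
    have c: "c \<noteq> 0" "c + 2 \<noteq> 0"
      using c2 unfolding c_def by (metis of_nat_eq_0_iff add_eq_0_iff_both_eq_0 zero_neq_numeral one_neq_zero)+
    have "w * b k = w ^ (2 * k + 2) / c"
      by (simp add: b_def c_def eval_nat_numeral)
    moreover have "2 * Suc k + 1 = Suc (2 * k + 2)" and "(of_nat (2 * Suc k + 1) :: complex) = c + 2"
      by (simp_all add: c_def)
    then have "b (Suc k) / w = w ^ (2 * k + 2) / (c + 2)"
      unfolding b_def using assms(2) by (simp only: power_Suc) simp
    ultimately have "(w * b k - b (Suc k) / w) / 2 = (w ^ (2 * k + 2) / c - w ^ (2 * k + 2) / (c + 2)) / 2"
      by (simp only:)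
    also have "\<dots> = 2 * w ^ (2 * k + 2) / (c * (c + 2)) / 2"
      by (subst diff_frac_eq[OF c]) (simp add: algebra_simps)
    also have "\<dots> = w ^ (2 * k + 2) / (c * (c + 2))"
      by simp
    finally show ?thesis
      by (simp only: c2 c_def)
  qed
  have limit: "(w * A - (A - w) / w) / 2 = (1 + (w - 1 / w) * A) / 2"
    using assms(2) by (simp add: field_simps)
  show ?thesis
    using sums[unfolded partial_fractions limit] unfolding A_def .
qed

lemma Im_Ln_one_plus_cis_minus_Im_Ln_one_minus_cis:
  assumes "0 < s" "s < pi / 2"
  shows "Im (Ln (1 + cis (2 * s))) - Im (Ln (1 - cis (2 * s))) = pi / 2"
proof -
  have "1 + cis (2 * s) = rcis (2 * cos s) s"
    by (simp add: complex_eq_iff rcis_def cos_double_cos sin_double power2_eq_square)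
  moreover have "1 - cis (2 * s) = rcis (2 * sin s) (s - pi / 2)"
    by (simp add: complex_eq_iff rcis_def cos_double_sin sin_double cos_diff sin_diff power2_eq_square)
  moreover have "0 < cos s" "0 < sin s"
    using assms by (simp_all add: cos_gt_zero_pi sin_gt_zero)
  ultimately show ?thesis
    using assms by (simp add: Ln_rcis)
qed

definition even_power_series :: "complex \<Rightarrow> complex" where
  "even_power_series w = (\<Sum>k. w ^ (2 * k + 2) / (of_nat (2 * k + 1) * of_nat (2 * k + 3)))"

lemma denom_0: "denom 0 k = real (2 * k + 1) * real (2 * k + 3)"
  unfolding denom_def by (simp add: algebra_simps)

lemma norm_even_power_term_le:
  fixes w :: complex
  assumes "norm w \<le> 1"
  shows "norm (w ^ (2 * k + 2) / (of_nat (2 * k + 1) * of_nat (2 * k + 3))) \<le> 1 / denom 0 k"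
proof -
  have "norm (w ^ (2 * k + 2) / (of_nat (2 * k + 1) * of_nat (2 * k + 3))) = norm w ^ (2 * k + 2) / denom 0 k"
    unfolding denom_0 by (simp only: norm_divide norm_power norm_mult norm_of_nat)
  also have "\<dots> \<le> 1 / denom 0 k"
    using assms denom_pos[of 0 k] by (intro divide_right_mono power_le_one) auto
  finally show ?thesis .
qed

lemma sums_even_power_series:
  "norm w \<le> 1 \<Longrightarrow> (\<lambda>k. w ^ (2 * k + 2) / (of_nat (2 * k + 1) * of_nat (2 * k + 3))) sums even_power_series w"
  unfolding even_power_series_def
  by (intro summable_sums summable_comparison_test[OF _ summable_inverse_denom[of 0]])
    (use norm_even_power_term_le in blast)

lemma continuous_on_even_power_series: "continuous_on (cball 0 1) even_power_series"
proof (rule uniform_limit_theorem[where F = sequentially])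
  show "uniform_limit (cball 0 1)
      (\<lambda>n w. \<Sum>k<n. w ^ (2 * k + 2) / (of_nat (2 * k + 1) * of_nat (2 * k + 3))) even_power_series sequentially"
    unfolding even_power_series_def[abs_def]
    by (rule Weierstrass_m_test[OF _ summable_inverse_denom[of 0]]) (rule norm_even_power_term_le, simp)
next
  have "(of_nat (2 * k + 1) * of_nat (2 * k + 3) :: complex) \<noteq> 0" for k
    by (simp only: of_nat_mult[symmetric] of_nat_eq_0_iff) simp
  then show "\<forall>\<^sub>F n in sequentially. continuous_on (cball 0 1)
      (\<lambda>w::complex. \<Sum>k<n. w ^ (2 * k + 2) / (of_nat (2 * k + 1) * of_nat (2 * k + 3)))"
    by (intro always_eventually allI continuous_on_sum continuous_on_divide continuous_intros) auto
qed simp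

lemma even_power_series_boundary:
  assumes "norm w = 1" "Im w \<noteq> 0"
  shows "even_power_series w = (1 + (w - 1 / w) * ((Ln (1 + w) - Ln (1 - w)) / 2)) / 2"
proof -
  define R where "R v = (1 + (v - 1 / v) * ((Ln (1 + v) - Ln (1 - v)) / 2)) / 2" for v
  have "(even_power_series \<longlongrightarrow> even_power_series w) (at w within ball 0 1)"
    using continuous_on_even_power_series assms(1)
    by (intro tendsto_within_subset[OF _ ball_subset_cball]) (simp add: continuous_on_def)
  moreover have "\<forall>\<^sub>F v in at w within ball 0 1. even_power_series v = R v"
  proof -
    have "even_power_series v = R v" if "v \<in> ball 0 1" "dist v w < 1" for v
    proof -
      have "v \<noteq> 0"
        using that assms(1) by auto
      with that show ?thesis
        unfolding R_def by (intro sums_unique2[OF sums_even_power_series sums_even_powers_over_odd_products]) auto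
    qed
    then show ?thesis
      unfolding eventually_at by (intro exI[of _ 1]) auto
  qed
  ultimately have "(R \<longlongrightarrow> even_power_series w) (at w within ball 0 1)"
    by (rule tendsto_cong[THEN iffD1, rotated])
  moreover have "(R \<longlongrightarrow> R w) (at w within ball 0 1)"
  proof -
    have "1 + w \<notin> \<real>\<^sub>\<le>\<^sub>0" "1 - w \<notin> \<real>\<^sub>\<le>\<^sub>0" "w \<noteq> 0"
      using assms by (auto simp: complex_nonpos_Reals_iff)
    then have "isCont R w"
      unfolding R_def by (intro continuous_intros) auto
    then show ?thesis
      unfolding isCont_def by (rule tendsto_mono[OF at_le[OF subset_UNIV]])
  qed
  moreover have "at w within ball 0 1 \<noteq> bot"
    using assms(1) by (simp add: trivial_limit_within islimpt_ball)
  ultimately show ?thesis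
    unfolding R_def[symmetric] by (metis tendsto_unique)
qed

lemma cos_series_0:
  assumes x: "x \<in> {0<..<2 * pi}"
  shows "cos_series 0 x = 1 / 2 - pi / 4 * sin (x / 2)"
proof -
  define w where "w = cis (x / 2)"
  have "0 < sin (x / 2)"
    using x by (intro sin_gt_zero) auto
  then have w: "norm w = 1" "Im w \<noteq> 0"
    by (simp_all add: w_def)
  have Re_term: "Re (w ^ (2 * k + 2) / (of_nat (2 * k + 1) * of_nat (2 * k + 3))) = cos (real (Suc k) * x) / denom 0 k" for k
  proof -
    have "w ^ (2 * k + 2) = cis (real (Suc k) * x)"
      unfolding w_def Complex.DeMoivre by (simp add: algebra_simps)
    moreover have "(of_nat (2 * k + 1) * of_nat (2 * k + 3) :: complex) = of_real (denom 0 k)"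
      unfolding denom_0 by simp
    ultimately show ?thesis
      by simp
  qed
  have "(\<lambda>k. Re (w ^ (2 * k + 2) / (of_nat (2 * k + 1) * of_nat (2 * k + 3)))) sums Re (even_power_series w)"
    by (rule sums_Re[OF sums_even_power_series]) (simp add: w)
  then have "(\<lambda>k. cos (real (Suc k) * x) / denom 0 k) sums Re (even_power_series w)"
    unfolding Re_term .
  then have "cos_series 0 x = Re (even_power_series w)"
    unfolding cos_series_def by (rule sums_unique[symmetric])
  also have "\<dots> = 1 / 2 - sin (x / 2) / 2 * (Im (Ln (1 + w)) - Im (Ln (1 - w)))"
  proof -
    have w_diff: "w - 1 / w = 2 * \<i> * complex_of_real (sin (x / 2))"
      unfolding w_def divide_inverse mult_1 cis_inverse by (simp add: complex_eq_iff)
    show ?thesis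
      unfolding even_power_series_boundary[OF w] w_diff by simp
  qed
  also have "\<dots> = 1 / 2 - pi / 4 * sin (x / 2)"
    using x Im_Ln_one_plus_cis_minus_Im_Ln_one_minus_cis[of "x / 4"] unfolding w_def by simp
  finally show ?thesis .
qed

lemma cos_series_eq_cos_closed_form:
  "x \<in> {0<..<2 * pi} \<Longrightarrow> cos_series (2 * p) x = cos_closed_form p x"
proof (induction p arbitrary: x)
  case 0
  then show ?case
    by (simp add: cos_series_0 cos_closed_form_def)
next
  case (Suc p)
  then show ?case
    by (blast intro: cos_series_eq_closed_form_from_sin sin_series_eq_closed_form_from_cos)
qed

theorem corollary7:
  fixes p :: nat and x :: real
  assumes "0 < x" and "x < 2 * pi"
  shows "(\<lambda>n. cos (real (Suc n) * x) /
            ((2 * real (Suc n) - 1) * (2 * real (Suc n)) ^ (2 * p) * (2 * real (Suc n) + 1)))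
         sums (1 / 2 - pi / 4 * sin (x / 2)
               - 1 / 2 * (\<Sum>j = 1..p. (-1) ^ (j + 1) * pi ^ (2 * j) / fact (2 * j)
                                      * bernoulli_poly (2 * j) (x / (2 * pi))))
       \<and> (\<lambda>n. sin (real (Suc n) * x) /
            ((2 * real (Suc n) - 1) * (2 * real (Suc n)) ^ (2 * p + 1) * (2 * real (Suc n) + 1)))
         sums (pi / 4 * cos (x / 2) - 1 / 4 * (pi - x)
               - 1 / 2 * (\<Sum>j = 1..p. (-1) ^ (j + 1) * pi ^ (2 * j + 1) / fact (2 * j + 1)
                                      * bernoulli_poly (2 * j + 1) (x / (2 * pi))))"
proof -
  have x: "x \<in> {0<..<2 * pi}"
    using assms by simp
  have cos: "(\<lambda>n. cos (real (Suc n) * x) / denom (2 * p) n) sums cos_closed_form p x"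
    using sums_cos_series[of x "2 * p"] unfolding cos_series_eq_cos_closed_form[OF x] .
  have "sin_series (Suc (2 * p)) x = sin_closed_form p x"
    by (rule sin_series_eq_closed_form_from_cos[OF cos_series_eq_cos_closed_form x])
  then have sin: "(\<lambda>n. sin (real (Suc n) * x) / denom (Suc (2 * p)) n) sums sin_closed_form p x"
    using sums_sin_series[of x "Suc (2 * p)"] by simp
  show ?thesis
    using cos sin unfolding denom_def cos_closed_form_def sin_closed_form_def scaled_bernoulli_def
    by (simp add: mult.assoc)
qed

end
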